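(* Let $A$ be an integral domain. If the polynomial $a_0+a_1x+\cdots+a_nx^n\in A[x]$ is divisible by $p^m$, where $p\in A[x]$ and $m\in\mathbb{N}$, then for all $z_1,z_2\in\mathbb{Z}$ and every $k\in\mathbb{N}$ with $k\le m$, the polynomial $\sum_{r=0}^n\binom{z_1+z_2r}{k}a_rx^r\in A[x]$ is divisible by $p^{m-k}$.
   Context: $\binom{z}{k}=z(z-1)\cdots(z-k+1)/k!$ for $z\in\mathbb{Z}$, $k\in\mathbb{N}$ (an integer). *)

theory Defs
  imports "HOL-Computational_Algebra.Polynomial"
begin

text \<open>Integer binomial coefficient, as in the paper:
  binom z k = z (z-1) ... (z-k+1) / k!  for z an integer and k a natural number
  (the division is exact).\<close>
definition int_binom :: "int \<Rightarrow> nat \<Rightarrow> int" where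
  "int_binom z k = (\<Prod>i<k. z - int i) div fact k"

end

theory Submission
  imports Defs "HOL-Computational_Algebra.Formal_Power_Series" HOL.Binomial_Plus
begin

text \<open>Work in \<open>A[x][[t]]\<close> with \<open>B\<^sub>z = (1 + t)\<^sup>z = \<Sum>\<^sub>k binom z k t\<^sup>k\<close>. Vandermonde's identity
  says \<open>B\<^sub>a B\<^sub>b = B\<^sub>a\<^sub>+\<^sub>b\<close>, so the substitution \<open>\<sigma>(f) = f(x B\<^sub>z\<^sub>2)\<close> is a ring homomorphism
  and the \<open>t\<^sup>k\<close>-coefficient of \<open>B\<^sub>z\<^sub>1 \<sigma>(\<Sum> a\<^sub>r x\<^sup>r)\<close> is \<open>\<Sum> binom (z\<^sub>1 + z\<^sub>2 r) k a\<^sub>r x\<^sup>r\<close>.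
  If \<open>f = p\<^sup>m q\<close> then \<open>B\<^sub>z\<^sub>1 \<sigma>(f) = B\<^sub>z\<^sub>1 \<sigma>(q) \<sigma>(p)\<^sup>m\<close>, and since \<open>\<sigma>(p)\<close> has constant term \<open>p\<close>,
  the \<open>t\<^sup>j\<close>-coefficient of \<open>\<sigma>(p)\<^sup>m\<close> is divisible by \<open>p\<^sup>m\<^sup>-\<^sup>j\<close>.\<close>

lemma of_int_int_binom: "(of_int (int_binom z k) :: 'a::field_char_0) = of_int z gchoose k"
  using of_int_gbinomial[of z k] gbinomial_prod_rev[of z k]
  by (simp add: int_binom_def atLeast0LessThan)

lemma int_binom_Vandermonde:
  "(\<Sum>i=0..n. int_binom a i * int_binom b (n - i)) = int_binom (a + b) n"
proof -
  have "(of_int (\<Sum>i=0..n. int_binom a i * int_binom b (n - i)) :: rat) = of_int (int_binom (a + b) n)"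
    by (simp add: of_int_int_binom gbinomial_Vandermonde)
  then show ?thesis
    by (simp only: of_int_eq_iff)
qed

lemma int_binom_0_right [simp]: "int_binom z 0 = 1"
  by (simp add: int_binom_def)

lemma int_binom_0_left: "int_binom 0 k = (if k = 0 then 1 else 0)"
proof -
  have "(of_int (int_binom 0 k) :: rat) = of_int (if k = 0 then 1 else 0)"
    by (simp add: of_int_int_binom gbinomial_0_left)
  then show ?thesis
    by (simp only: of_int_eq_iff)
qed

definition fps_int_binomial :: "int \<Rightarrow> 'a::comm_ring_1 fps" where
  "fps_int_binomial z = Abs_fps (\<lambda>k. of_int (int_binom z k))"

lemma fps_int_binomial_add_mult:
  "fps_int_binomial a * fps_int_binomial b = (fps_int_binomial (a + b) :: 'a::comm_ring_1 fps)"
proof (rule fps_ext)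
  fix n
  have "fps_nth (fps_int_binomial a * fps_int_binomial b :: 'a fps) n
      = of_int (\<Sum>i=0..n. int_binom a i * int_binom b (n - i))"
    by (simp add: fps_int_binomial_def fps_mult_nth)
  then show "fps_nth (fps_int_binomial a * fps_int_binomial b :: 'a fps) n = fps_nth (fps_int_binomial (a + b)) n"
    by (simp add: int_binom_Vandermonde fps_int_binomial_def)
qed

lemma fps_int_binomial_0 [simp]: "fps_int_binomial 0 = 1"
  by (rule fps_ext) (simp add: fps_int_binomial_def int_binom_0_left)

lemma fps_int_binomial_power: "fps_int_binomial z ^ r = fps_int_binomial (z * int r)"
  by (induction r) (simp_all add: fps_int_binomial_add_mult algebra_simps)

lemma map_poly_add:
  assumes "h 0 = 0" "\<And>x y. h (x + y) = h x + h y"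
  shows "map_poly h (p + q) = map_poly h p + map_poly h q"
  by (rule poly_eqI) (simp add: assms coeff_map_poly)

lemma map_poly_mult:
  assumes "h 0 = 0" "\<And>x y. h (x + y) = h x + h y" "\<And>x y. h (x * y) = h x * h y"
  shows "map_poly h (p * q) = map_poly h p * map_poly h q"
  by (induction p) (simp_all add: assms map_poly_add map_poly_smult map_poly_pCons)

text \<open>With \<open>fps_int_binomial z = B\<^sub>z\<close>, \<open>subst_binomial z f\<close> is \<open>\<sigma>(f) = f(x B\<^sub>z)\<close> in \<open>A[x][[t]]\<close>.\<close>

definition subst_binomial :: "int \<Rightarrow> 'a::comm_ring_1 poly \<Rightarrow> 'a poly fps" where
  "subst_binomial z f = poly (map_poly (\<lambda>c. fps_const [:c:]) f) (fps_const [:0, 1:] * fps_int_binomial z)"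

lemma subst_binomial_add: "subst_binomial z (f + g) = subst_binomial z f + subst_binomial z g"
  by (simp add: subst_binomial_def map_poly_add)

lemma subst_binomial_mult: "subst_binomial z (f * g) = subst_binomial z f * subst_binomial z g"
  by (simp add: subst_binomial_def map_poly_mult mult.commute)

lemma subst_binomial_power: "subst_binomial z (f ^ m) = subst_binomial z f ^ m"
  by (induction m) (simp_all add: subst_binomial_mult, simp add: subst_binomial_def)

lemma subst_binomial_sum: "subst_binomial z (sum g A) = (\<Sum>r\<in>A. subst_binomial z (g r))"
  using sum_comp_morphism[of "subst_binomial z" g A]
  by (simp add: subst_binomial_add o_def, simp add: subst_binomial_def)

lemma subst_binomial_monom:
  "subst_binomial z (monom e r) = fps_const (monom e r) * fps_int_binomial z ^ r"
proof -
  have "subst_binomial z (monom e r) = fps_const [:e:] * (fps_const [:0, 1:] * fps_int_binomial z) ^ r"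
    by (simp add: subst_binomial_def map_poly_monom poly_monom)
  also have "\<dots> = fps_const ([:e:] * [:0, 1:] ^ r) * fps_int_binomial z ^ r"
    by (simp add: power_mult_distrib flip: mult.assoc)
  finally show ?thesis
    by (simp add: monom_altdef)
qed

lemma fps_int_binomial_mult_subst_binomial_monom:
  "fps_int_binomial c * subst_binomial z (monom e r)
     = fps_const (monom e r) * fps_int_binomial (c + z * int r)"
  by (simp only: subst_binomial_monom fps_int_binomial_power
      mult.left_commute[of "fps_int_binomial c"] fps_int_binomial_add_mult)

lemma fps_nth_fps_int_binomial_mult_subst_binomial:
  "fps_nth (fps_int_binomial c * subst_binomial z (\<Sum>r\<le>n. monom (a r) r)) k
     = (\<Sum>r\<le>n. monom (of_int (int_binom (c + z * int r) k) * a r) r)"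
proof -
  have "fps_int_binomial c * subst_binomial z (\<Sum>r\<le>n. monom (a r) r)
      = (\<Sum>r\<le>n. fps_const (monom (a r) r) * fps_int_binomial (c + z * int r))"
    by (simp add: subst_binomial_sum sum_distrib_left fps_int_binomial_mult_subst_binomial_monom)
  then show ?thesis
    by (simp add: fps_sum_nth fps_int_binomial_def of_int_poly smult_monom)
qed

lemma fps_nth_subst_binomial_0: "fps_nth (subst_binomial z p) 0 = p"
  using fps_nth_fps_int_binomial_mult_subst_binomial[of 0 z "coeff p" "degree p" 0]
  by (simp add: poly_as_sum_of_monoms)

lemma dvd_fps_nth_mult_left:
  fixes F G :: "'a::comm_ring_1 fps"
  assumes "\<And>j. p ^ (m - j) dvd fps_nth F j"
  shows "p ^ (m - j) dvd fps_nth (G * F) j"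
  unfolding fps_mult_nth
proof (intro dvd_sum dvd_mult)
  fix i assume "i \<in> {0..j}"
  then have "p ^ (m - j) dvd p ^ (m - (j - i))"
    by (intro le_imp_power_dvd) auto
  then show "p ^ (m - j) dvd fps_nth F (j - i)"
    using assms dvd_trans by blast
qed

lemma dvd_fps_nth_mult_const_term:
  fixes F H :: "'a::comm_ring_1 fps"
  assumes "fps_nth H 0 = p" "\<And>j. p ^ (m - j) dvd fps_nth F j"
  shows "p ^ (Suc m - j) dvd fps_nth (H * F) j"
  unfolding fps_mult_nth
proof (intro dvd_sum)
  fix i assume i: "i \<in> {0..j}"
  show "p ^ (Suc m - j) dvd fps_nth H i * fps_nth F (j - i)"
  proof (cases "i = 0")
    case True
    have "p ^ (Suc m - j) dvd p * p ^ (m - j)"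
      using le_imp_power_dvd[of "Suc m - j" "Suc (m - j)" p] by simp
    then show ?thesis
      using True assms by (simp add: dvd_trans mult_dvd_mono)
  next
    case False
    then have "p ^ (Suc m - j) dvd p ^ (m - (j - i))"
      using i by (intro le_imp_power_dvd) auto
    then show ?thesis
      using assms(2) dvd_trans dvd_mult by blast
  qed
qed

lemma dvd_fps_nth_power:
  fixes H :: "'a::comm_ring_1 fps"
  assumes "fps_nth H 0 = p"
  shows "p ^ (m - j) dvd fps_nth (H ^ m) j"
proof (induction m arbitrary: j)
  case (Suc m)
  show ?case
    using dvd_fps_nth_mult_const_term[OF assms Suc.IH] by simp
qed simp

theorem lemma4p1:
  fixes a :: "nat \<Rightarrow> 'a::idom" and n m k :: nat and p :: "'a poly" and z1 z2 :: int
  assumes "p ^ m dvd (\<Sum>r\<le>n. monom (a r) r)"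
    and "k \<le> m"
  shows "p ^ (m - k) dvd (\<Sum>r\<le>n. monom (of_int (int_binom (z1 + z2 * int r) k) * a r) r)"
proof -
  let ?f = "\<Sum>r\<le>n. monom (a r) r"
  obtain q where q: "?f = p ^ m * q"
    using assms(1) by blast
  have "p ^ (m - k) dvd fps_nth (fps_int_binomial z1 * subst_binomial z2 q * subst_binomial z2 p ^ m) k"
    by (intro dvd_fps_nth_mult_left dvd_fps_nth_power fps_nth_subst_binomial_0)
  also have "fps_int_binomial z1 * subst_binomial z2 q * subst_binomial z2 p ^ m
      = fps_int_binomial z1 * subst_binomial z2 ?f"
    by (simp only: q subst_binomial_mult subst_binomial_power ac_simps)
  finally show ?thesis
    by (simp only: fps_nth_fps_int_binomial_mult_subst_binomial)
qed

end
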